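(* For the black-bounce Kerr--Newman spacetime (metric in the context), define the antisymmetric tensor $f_{\mu\nu}$ in coordinates $(t,r,\theta,\phi)$ by the nonzero components $$f_{tr}=-f_{rt}=-a\cos\theta,\quad f_{r\phi}=-f_{\phi r}=-a^2\cos\theta\sin^2\theta,$$ $$f_{t\theta}=-f_{\theta t}=a\sqrt{r^2+\ell^2}\sin\theta,\quad f_{\theta\phi}=-f_{\phi\theta}=\sqrt{r^2+\ell^2}\,\sin\theta\,(r^2+\ell^2+a^2).$$ Then $f_{\mu\alpha}f^{\alpha}{}_{\nu}=K_{\mu\nu}$, where $K_{\mu\nu}$ is the Killing tensor defined in the context, but for $\ell\neq0$ (and $a\ne 0$) $f_{\mu\nu}$ is not a Killing--Yano tensor: $f_{\mu(\nu;\alpha)}\neq0$.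
   Context: The black-bounce Kerr--Newman spacetime is $$\mathrm{d}s^2=-\frac{\Delta}{\rho^2}(a\sin^2\theta\,\mathrm{d}\phi-\mathrm{d}t)^2+\frac{\sin^2\theta}{\rho^2}\big[(r^2+\ell^2+a^2)\mathrm{d}\phi-a\,\mathrm{d}t\big]^2+\frac{\rho^2}{\Delta}\mathrm{d}r^2+\rho^2\mathrm{d}\theta^2,$$ with $\rho^2=r^2+\ell^2+a^2\cos^2\theta$, $\Delta=r^2+\ell^2+a^2-2m\sqrt{r^2+\ell^2}+Q^2$. The Killing tensor is $K_{\mu\nu}=\rho^2(l_\mu n_\nu+l_\nu n_\mu)+(r^2+\ell^2)g_{\mu\nu}$ with $l^\mu=\big(\frac{r^2+\ell^2+a^2}{\Delta},1,0,\frac{a}{\Delta}\big)$ and $n^\mu=\frac{1}{2\rho^2}(r^2+\ell^2+a^2,-\Delta,0,a)$. Indices are raised/lowered with this metric. *)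

theory Defs
  imports "HOL-Analysis.Analysis"
begin

text \<open>Coordinates x = (t, r, theta, phi) are indexed by the type 4:
  index 0 = t, 1 = r, 2 = theta, 3 = phi.  Parameters: a (spin), l (bounce
  parameter ell), m (mass), Q (charge).\<close>

definition Sig :: "real \<Rightarrow> real^4 \<Rightarrow> real" where
  "Sig l x = (x$1)^2 + l^2"

definition rho2 :: "real \<Rightarrow> real \<Rightarrow> real^4 \<Rightarrow> real" where
  "rho2 a l x = Sig l x + a^2 * (cos (x$2))^2"

definition Delta :: "real \<Rightarrow> real \<Rightarrow> real \<Rightarrow> real \<Rightarrow> real^4 \<Rightarrow> real" where
  "Delta a l m Q x = Sig l x + a^2 - 2 * m * sqrt (Sig l x) + Q^2"

definition uco :: "real \<Rightarrow> real^4 \<Rightarrow> real^4" where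
  "uco a x = (\<chi> i. if i = 0 then -1 else if i = 3 then a * (sin (x$2))^2 else 0)"

definition wco :: "real \<Rightarrow> real \<Rightarrow> real^4 \<Rightarrow> real^4" where
  "wco a l x = (\<chi> i. if i = 0 then -a else if i = 3 then Sig l x + a^2 else 0)"

definition bbg :: "real \<Rightarrow> real \<Rightarrow> real \<Rightarrow> real \<Rightarrow> real^4 \<Rightarrow> real^4^4" where
  "bbg a l m Q x = (\<chi> i j.
      - Delta a l m Q x / rho2 a l x * (uco a x $ i) * (uco a x $ j)
      + (sin (x$2))^2 / rho2 a l x * (wco a l x $ i) * (wco a l x $ j)
      + (if i = 1 \<and> j = 1 then rho2 a l x / Delta a l m Q x else 0)
      + (if i = 2 \<and> j = 2 then rho2 a l x else 0))"

definition bbginv :: "real \<Rightarrow> real \<Rightarrow> real \<Rightarrow> real \<Rightarrow> real^4 \<Rightarrow> real^4^4" where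
  "bbginv a l m Q x = matrix_inv (bbg a l m Q x)"

definition lvec :: "real \<Rightarrow> real \<Rightarrow> real \<Rightarrow> real \<Rightarrow> real^4 \<Rightarrow> real^4" where
  "lvec a l m Q x = (\<chi> i. if i = 0 then (Sig l x + a^2) / Delta a l m Q x
      else if i = 1 then 1 else if i = 2 then 0 else a / Delta a l m Q x)"

definition nvec :: "real \<Rightarrow> real \<Rightarrow> real \<Rightarrow> real \<Rightarrow> real^4 \<Rightarrow> real^4" where
  "nvec a l m Q x = (\<chi> i. (1 / (2 * rho2 a l x)) * (if i = 0 then Sig l x + a^2
      else if i = 1 then - Delta a l m Q x else if i = 2 then 0 else a))"

definition lowered :: "real \<Rightarrow> real \<Rightarrow> real \<Rightarrow> real \<Rightarrow> real^4 \<Rightarrow> real^4 \<Rightarrow> real^4" where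
  "lowered a l m Q x v = bbg a l m Q x *v v"

definition Ktens :: "real \<Rightarrow> real \<Rightarrow> real \<Rightarrow> real \<Rightarrow> real^4 \<Rightarrow> real^4^4" where
  "Ktens a l m Q x = (\<chi> i j.
      rho2 a l x * ((lowered a l m Q x (lvec a l m Q x)) $ i * (lowered a l m Q x (nvec a l m Q x)) $ j
                  + (lowered a l m Q x (lvec a l m Q x)) $ j * (lowered a l m Q x (nvec a l m Q x)) $ i)
      + Sig l x * (bbg a l m Q x $ i $ j))"

definition fupper :: "real \<Rightarrow> real \<Rightarrow> real^4 \<Rightarrow> 4 \<Rightarrow> 4 \<Rightarrow> real" where
  "fupper a l x i j =
     (if i = 0 \<and> j = 1 then - a * cos (x$2)
      else if i = 1 \<and> j = 3 then - (a^2 * cos (x$2) * (sin (x$2))^2)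
      else if i = 0 \<and> j = 2 then a * sqrt (Sig l x) * sin (x$2)
      else if i = 2 \<and> j = 3 then sqrt (Sig l x) * sin (x$2) * (Sig l x + a^2)
      else 0)"

definition ften :: "real \<Rightarrow> real \<Rightarrow> real^4 \<Rightarrow> real^4^4" where
  "ften a l x = (\<chi> i j. fupper a l x i j - fupper a l x j i)"

definition pd :: "4 \<Rightarrow> (real^4 \<Rightarrow> real) \<Rightarrow> real^4 \<Rightarrow> real" where
  "pd k F x = deriv (\<lambda>s. F (x + s *\<^sub>R axis k 1)) 0"

definition Chr :: "real \<Rightarrow> real \<Rightarrow> real \<Rightarrow> real \<Rightarrow> 4 \<Rightarrow> 4 \<Rightarrow> 4 \<Rightarrow> real^4 \<Rightarrow> real" where
  "Chr a l m Q L A M x = (1/2) * (\<Sum>s\<in>UNIV. bbginv a l m Q x $ L $ s *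
      (pd A (\<lambda>y. bbg a l m Q y $ s $ M) x + pd M (\<lambda>y. bbg a l m Q y $ s $ A) x
       - pd s (\<lambda>y. bbg a l m Q y $ A $ M) x))"

definition covf :: "real \<Rightarrow> real \<Rightarrow> real \<Rightarrow> real \<Rightarrow> 4 \<Rightarrow> 4 \<Rightarrow> 4 \<Rightarrow> real^4 \<Rightarrow> real" where
  "covf a l m Q mu nu al x = pd al (\<lambda>y. ften a l y $ mu $ nu) x
     - (\<Sum>L\<in>UNIV. Chr a l m Q L al mu x * ften a l x $ L $ nu)
     - (\<Sum>L\<in>UNIV. Chr a l m Q L al nu x * ften a l x $ mu $ L)"

definition covf_sym :: "real \<Rightarrow> real \<Rightarrow> real \<Rightarrow> real \<Rightarrow> 4 \<Rightarrow> 4 \<Rightarrow> 4 \<Rightarrow> real^4 \<Rightarrow> real" where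
  "covf_sym a l m Q mu nu al x = (covf a l m Q mu nu al x + covf a l m Q mu al nu x) / 2"

definition bbdom :: "real \<Rightarrow> real \<Rightarrow> real \<Rightarrow> real \<Rightarrow> real^4 \<Rightarrow> bool" where
  "bbdom a l m Q x \<longleftrightarrow> Delta a l m Q x \<noteq> 0 \<and> rho2 a l x \<noteq> 0 \<and> sin (x$2) \<noteq> 0"

end

theory Submission
  imports Defs
begin

text \<open>
  Besides the covectors u = uco and w = wco of the line element consider the vectors
  V = uco_dual = (r^2+l^2+a^2, 0, 0, a) and W = wco_dual = (a sin^2 theta, 0, 0, 1).
  Then u.V = -rho^2, w.W = rho^2 and u.W = w.V = 0, so g and its inverse are sums of four
  outer products in the dual frames (u, w, dr, dtheta) and (V, W, d/dr, d/dtheta).  The matrix f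
  sends V and W to multiples of dr and dtheta, and d/dr, d/dtheta to multiples of u and w; hence
  f g^-1 f^T is again a combination of outer u u, outer w w, outer dr dr and outer dtheta dtheta.
  So is K, because the lowered null vectors are u + (rho^2/Delta) dr and
  (Delta u - rho^2 dr)/(2 rho^2), and the coefficients agree.

  For the second claim evaluate f_t(r;theta) on the equator theta = pi/2 at a radius r > 2|m|,
  where Delta > 0.  There f_tr = f_r phi = 0, and the only Christoffel symbols that survive are
  Gamma^theta_r theta = r/(r^2+l^2) and the combination a Gamma^t_rt - (r^2+l^2+a^2) Gamma^phi_rt,
  which vanishes because g W = sin^2 theta w makes a g_tt + g_phi t = -a along the equator.
  The result is a (1 - r/sqrt(r^2+l^2))/2, which is nonzero when a l \<noteq> 0.
\<close>

lemma UNIV_4_from_0: "(UNIV :: 4 set) = {0, 1, 2, 3}"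
  using UNIV_4 by auto

lemma sum_UNIV_4_from_0: "sum f (UNIV :: 4 set) = f 0 + f 1 + f 2 + f 3"
  unfolding UNIV_4_from_0 by (simp add: ac_simps)

lemma forall_4_from_0: "(\<forall>i::4. P i) \<longleftrightarrow> P 0 \<and> P 1 \<and> P 2 \<and> P 3"
  by (metis UNIV_4_from_0 UNIV_I empty_iff insert_iff)

definition outer :: "real^'n \<Rightarrow> real^'m \<Rightarrow> real^'m^'n" where
  "outer x y = (\<chi> i j. x $ i * y $ j)"

lemma outer_nth [simp]: "outer x y $ i $ j = x $ i * y $ j"
  by (simp add: outer_def)

lemma outer_scaleR_left [simp]: "outer (c *\<^sub>R x) y = c *\<^sub>R outer x y"
  by (simp add: vec_eq_iff)

lemma outer_scaleR_right [simp]: "outer x (c *\<^sub>R y) = c *\<^sub>R outer x y"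
  by (simp add: vec_eq_iff)

lemma outer_mult_vector: "outer x y *v z = (y \<bullet> z) *\<^sub>R x"
  by (simp add: vec_eq_iff matrix_vector_mult_def inner_vec_def sum_distrib_left ac_simps)

lemma matrix_mult_outer: "A ** outer x y = outer (A *v x) y"
  by (simp add: vec_eq_iff matrix_matrix_mult_def matrix_vector_mult_def sum_distrib_left ac_simps)

lemma outer_mult_transpose: "outer x y ** transpose B = outer x (B *v y)"
  by (simp add: vec_eq_iff matrix_matrix_mult_def matrix_vector_mult_def transpose_def
      sum_distrib_left ac_simps)

lemma matrix_add_rdistrib: "(A + B) ** C = A ** C + B ** C"
  by (vector matrix_matrix_mult_def sum.distrib distrib_right)

lemma matrix_inv_eq_right_inverse:
  fixes A :: "real^'n^'n"
  assumes "A ** B = mat 1"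
  shows "matrix_inv A = B"
proof -
  have "B ** A = mat 1"
    using assms matrix_left_right_inverse by blast
  with assms have inv: "A ** matrix_inv A = mat 1 \<and> matrix_inv A ** A = mat 1"
    unfolding matrix_inv_def by (rule someI[of _ B, OF conjI])
  have "matrix_inv A = matrix_inv A ** (A ** B)"
    using assms by simp
  also have "\<dots> = B"
    using inv by (simp add: matrix_mul_assoc)
  finally show ?thesis .
qed

lemma contraction_eq_matrix_product:
  "(\<Sum>j\<in>UNIV. F $ i $ j * (\<Sum>k\<in>UNIV. G $ j $ k * F $ i' $ k)) = (F ** G ** transpose F) $ i $ i'"
  by (simp add: matrix_matrix_mult_def transpose_def sum_distrib_left sum_distrib_right ac_simps)
     (rule sum.swap)

definition uco_dual :: "real \<Rightarrow> real \<Rightarrow> real^4 \<Rightarrow> real^4" where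
  "uco_dual a l x = (\<chi> i. if i = 0 then Sig l x + a^2 else if i = 3 then a else 0)"

definition wco_dual :: "real \<Rightarrow> real^4 \<Rightarrow> real^4" where
  "wco_dual a x = (\<chi> i. if i = 0 then a * (sin (x$2))^2 else if i = 3 then 1 else 0)"

lemma Sig_nonneg: "0 \<le> Sig l x"
  by (simp add: Sig_def)

lemma rho2_eq: "rho2 a l x = Sig l x + a^2 - a^2 * (sin (x$2))^2"
  by (simp add: rho2_def cos_squared_eq algebra_simps)

lemma uco_inner_uco_dual: "uco a x \<bullet> uco_dual a l x = - rho2 a l x"
  by (simp add: inner_vec_def sum_UNIV_4_from_0 uco_def uco_dual_def rho2_eq power2_eq_square)

lemma uco_inner_wco_dual: "uco a x \<bullet> wco_dual a x = 0"
  by (simp add: inner_vec_def sum_UNIV_4_from_0 uco_def wco_dual_def)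

lemma wco_inner_uco_dual: "wco a l x \<bullet> uco_dual a l x = 0"
  by (simp add: inner_vec_def sum_UNIV_4_from_0 wco_def uco_dual_def algebra_simps)

lemma wco_inner_wco_dual: "wco a l x \<bullet> wco_dual a x = rho2 a l x"
  by (simp add: inner_vec_def sum_UNIV_4_from_0 wco_def wco_dual_def rho2_eq algebra_simps power2_eq_square)

lemma bbg_eq_outer:
  "bbg a l m Q x =
     (- Delta a l m Q x / rho2 a l x) *\<^sub>R outer (uco a x) (uco a x)
   + ((sin (x$2))^2 / rho2 a l x) *\<^sub>R outer (wco a l x) (wco a l x)
   + (rho2 a l x / Delta a l m Q x) *\<^sub>R outer (axis 1 1) (axis 1 1)
   + rho2 a l x *\<^sub>R outer (axis 2 1) (axis 2 1)"
  by (simp add: vec_eq_iff bbg_def axis_def)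

lemma bbginv_eq_outer:
  assumes "bbdom a l m Q x"
  shows "bbginv a l m Q x = (1 / rho2 a l x) *\<^sub>R
     (- (1 / Delta a l m Q x) *\<^sub>R outer (uco_dual a l x) (uco_dual a l x)
      + (1 / (sin (x$2))^2) *\<^sub>R outer (wco_dual a x) (wco_dual a x)
      + Delta a l m Q x *\<^sub>R outer (axis 1 1) (axis 1 1)
      + outer (axis 2 1) (axis 2 1))" (is "_ = ?G")
  unfolding bbginv_def
proof (rule matrix_inv_eq_right_inverse)
  have nz: "Delta a l m Q x \<noteq> 0" "rho2 a l x \<noteq> 0" "sin (x$2) \<noteq> 0"
    using assms by (auto simp: bbdom_def)
  have Sig_eq: "Sig l x = rho2 a l x - a^2 + a^2 * (sin (x$2))^2"
    by (simp add: rho2_eq)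
  show "bbg a l m Q x ** ?G = mat 1"
    using nz
    by (simp add: vec_eq_iff matrix_matrix_mult_def sum_UNIV_4_from_0 forall_4_from_0 bbg_def
        uco_def wco_def uco_dual_def wco_dual_def axis_def mat_def field_simps Sig_eq)
       (simp add: algebra_simps eval_nat_numeral)
qed

lemma inner_axis_frame:
  "uco a x \<bullet> axis 1 1 = 0" "uco a x \<bullet> axis 2 1 = 0"
  "wco a l x \<bullet> axis 1 1 = 0" "wco a l x \<bullet> axis 2 1 = 0"
  "axis 1 1 \<bullet> uco_dual a l x = 0" "axis 2 1 \<bullet> uco_dual a l x = 0"
  "axis 1 1 \<bullet> wco_dual a x = 0" "axis 2 1 \<bullet> wco_dual a x = 0"
  "axis 1 1 \<bullet> (axis 1 1 :: real^4) = 1" "axis 2 1 \<bullet> (axis 1 1 :: real^4) = 0"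
  by (simp_all add: inner_vec_def sum_UNIV_4_from_0 axis_def uco_def wco_def uco_dual_def wco_dual_def)

lemma lvec_eq: "lvec a l m Q x = (1 / Delta a l m Q x) *\<^sub>R uco_dual a l x + axis 1 1"
  by (simp add: vec_eq_iff forall_4_from_0 lvec_def uco_dual_def axis_def)

lemma nvec_eq: "nvec a l m Q x =
    (1 / (2 * rho2 a l x)) *\<^sub>R (uco_dual a l x - Delta a l m Q x *\<^sub>R axis 1 1)"
  by (simp add: vec_eq_iff forall_4_from_0 nvec_def uco_dual_def axis_def)

lemma bbg_mult_uco_dual:
  assumes "rho2 a l x \<noteq> 0"
  shows "bbg a l m Q x *v uco_dual a l x = Delta a l m Q x *\<^sub>R uco a x"
  using assms
  by (simp add: bbg_eq_outer matrix_vector_mult_add_rdistrib matrix_vector_mult_diff_rdistrib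
      scaleR_matrix_vector_assoc[symmetric] outer_mult_vector uco_inner_uco_dual
      wco_inner_uco_dual inner_axis_frame)

lemma bbg_mult_wco_dual:
  assumes "rho2 a l x \<noteq> 0"
  shows "bbg a l m Q x *v wco_dual a x = (sin (x$2))^2 *\<^sub>R wco a l x"
  using assms
  by (simp add: bbg_eq_outer matrix_vector_mult_add_rdistrib matrix_vector_mult_diff_rdistrib
      scaleR_matrix_vector_assoc[symmetric] outer_mult_vector uco_inner_wco_dual
      wco_inner_wco_dual inner_axis_frame)

lemma bbg_symmetric: "bbg a l m Q x $ j $ i = bbg a l m Q x $ i $ j"
  by (simp add: bbg_def ac_simps conj_commute)

lemma bbg_mult_axis_1:
  assumes "Delta a l m Q x \<noteq> 0"
  shows "bbg a l m Q x *v axis 1 1 = (rho2 a l x / Delta a l m Q x) *\<^sub>R axis 1 1"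
  using assms
  by (simp add: bbg_eq_outer matrix_vector_mult_add_rdistrib matrix_vector_mult_diff_rdistrib
      scaleR_matrix_vector_assoc[symmetric] outer_mult_vector inner_axis_frame)

lemma lowered_lvec:
  assumes "bbdom a l m Q x"
  shows "lowered a l m Q x (lvec a l m Q x)
    = uco a x + (rho2 a l x / Delta a l m Q x) *\<^sub>R axis 1 1"
  using assms
  by (simp add: lowered_def lvec_eq matrix_vector_right_distrib matrix_vector_mult_scaleR
      bbg_mult_uco_dual bbg_mult_axis_1 bbdom_def)

lemma lowered_nvec:
  assumes "bbdom a l m Q x"
  shows "lowered a l m Q x (nvec a l m Q x)
    = (Delta a l m Q x / (2 * rho2 a l x)) *\<^sub>R uco a x - (1/2) *\<^sub>R axis 1 1"
  using assms
  by (simp add: lowered_def nvec_eq matrix_vector_mult_diff_distrib matrix_vector_mult_scaleR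
      bbg_mult_uco_dual bbg_mult_axis_1 bbdom_def scaleR_diff_right)

lemma ften_mult_uco_dual:
  "ften a l x *v uco_dual a l x = (a * cos (x$2) * rho2 a l x) *\<^sub>R axis 1 1"
  by (simp add: vec_eq_iff forall_4_from_0 matrix_vector_mult_def sum_UNIV_4_from_0 ften_def
      fupper_def uco_dual_def axis_def rho2_eq cos_squared_eq algebra_simps power2_eq_square)

lemma ften_mult_wco_dual:
  "ften a l x *v wco_dual a x = (sqrt (Sig l x) * sin (x$2) * rho2 a l x) *\<^sub>R axis 2 1"
  by (simp add: vec_eq_iff forall_4_from_0 matrix_vector_mult_def sum_UNIV_4_from_0 ften_def
      fupper_def wco_dual_def axis_def rho2_eq algebra_simps power2_eq_square)

lemma ften_mult_axis_1: "ften a l x *v axis 1 1 = (a * cos (x$2)) *\<^sub>R uco a x"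
  by (simp add: vec_eq_iff forall_4_from_0 matrix_vector_mult_def sum_UNIV_4_from_0 ften_def
      fupper_def uco_def axis_def algebra_simps power2_eq_square)

lemma ften_mult_axis_2: "ften a l x *v axis 2 1 = (- sqrt (Sig l x) * sin (x$2)) *\<^sub>R wco a l x"
  by (simp add: vec_eq_iff forall_4_from_0 matrix_vector_mult_def sum_UNIV_4_from_0 ften_def
      fupper_def wco_def axis_def algebra_simps)

lemma matrix_bbginv_transpose:
  assumes "bbdom a l m Q x"
  shows "F ** bbginv a l m Q x ** transpose F = (1 / rho2 a l x) *\<^sub>R
     (- (1 / Delta a l m Q x) *\<^sub>R outer (F *v uco_dual a l x) (F *v uco_dual a l x)
      + (1 / (sin (x$2))^2) *\<^sub>R outer (F *v wco_dual a x) (F *v wco_dual a x)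
      + Delta a l m Q x *\<^sub>R outer (F *v axis 1 1) (F *v axis 1 1)
      + outer (F *v axis 2 1) (F *v axis 2 1))"
  unfolding bbginv_eq_outer[OF assms]
  by (simp only: matrix_add_ldistrib matrix_add_rdistrib matrix_scalar_ac
      scalar_matrix_assoc[symmetric] matrix_mult_outer outer_mult_transpose
      scaleR_matrix_vector_assoc[symmetric] outer_scaleR_left
      scaleR_right_distrib scaleR_scaleR mult.commute)

lemma ften_bbginv_ften_eq_outer:
  assumes "bbdom a l m Q x"
  shows "ften a l x ** bbginv a l m Q x ** transpose (ften a l x) =
      (Delta a l m Q x * (rho2 a l x - Sig l x) / rho2 a l x) *\<^sub>R outer (uco a x) (uco a x)
    + (Sig l x * (sin (x$2))^2 / rho2 a l x) *\<^sub>R outer (wco a l x) (wco a l x)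
    + (- rho2 a l x * (rho2 a l x - Sig l x) / Delta a l m Q x) *\<^sub>R outer (axis 1 1) (axis 1 1)
    + (Sig l x * rho2 a l x) *\<^sub>R outer (axis 2 1) (axis 2 1)"
proof -
  have nz: "Delta a l m Q x \<noteq> 0" "rho2 a l x \<noteq> 0" "sin (x$2) \<noteq> 0"
    using assms by (auto simp: bbdom_def)
  define q where "q = sqrt (Sig l x)"
  have Sig_q: "Sig l x = q * q"
    using Sig_nonneg[of l x] by (simp add: q_def)
  have cos_sq: "a * cos (x$2) * (a * cos (x$2)) = rho2 a l x - Sig l x"
    by (simp add: rho2_def power2_eq_square)
  have "1 / rho2 a l x * (- (1 / Delta a l m Q x) *
      (a * cos (x$2) * rho2 a l x * (a * cos (x$2) * rho2 a l x)))
    = - (a * cos (x$2) * (a * cos (x$2))) * rho2 a l x / Delta a l m Q x"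
    using nz by (simp add: field_simps)
  then have coeff_axis_1: "1 / rho2 a l x * (- (1 / Delta a l m Q x) *
      (a * cos (x$2) * rho2 a l x * (a * cos (x$2) * rho2 a l x)))
    = - rho2 a l x * (rho2 a l x - Sig l x) / Delta a l m Q x"
    by (simp only: cos_sq mult.commute)
  have coeff_axis_2: "1 / rho2 a l x * (1 / (sin (x$2))^2 *
      (q * sin (x$2) * rho2 a l x * (q * sin (x$2) * rho2 a l x)))
    = Sig l x * rho2 a l x"
    using nz by (simp add: Sig_q field_simps power2_eq_square)
  have coeff_uco: "1 / rho2 a l x * (Delta a l m Q x * (a * cos (x$2) * (a * cos (x$2))))
    = Delta a l m Q x * (rho2 a l x - Sig l x) / rho2 a l x"
    by (simp add: cos_sq)
  have coeff_wco: "1 / rho2 a l x * (- q * sin (x$2) * (- q * sin (x$2)))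
    = Sig l x * (sin (x$2))^2 / rho2 a l x"
    by (simp add: Sig_q power2_eq_square)
  show ?thesis
    unfolding matrix_bbginv_transpose[OF assms] ften_mult_uco_dual ften_mult_wco_dual
      ften_mult_axis_1 ften_mult_axis_2 q_def[symmetric]
    by (simp only: outer_scaleR_left outer_scaleR_right scaleR_scaleR scaleR_right_distrib
        coeff_axis_1 coeff_axis_2 coeff_uco coeff_wco) (simp only: ac_simps)
qed

lemma Ktens_eq_outer:
  assumes "bbdom a l m Q x"
  shows "Ktens a l m Q x =
      (Delta a l m Q x * (rho2 a l x - Sig l x) / rho2 a l x) *\<^sub>R outer (uco a x) (uco a x)
    + (Sig l x * (sin (x$2))^2 / rho2 a l x) *\<^sub>R outer (wco a l x) (wco a l x)
    + (- rho2 a l x * (rho2 a l x - Sig l x) / Delta a l m Q x) *\<^sub>R outer (axis 1 1) (axis 1 1)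
    + (Sig l x * rho2 a l x) *\<^sub>R outer (axis 2 1) (axis 2 1)"
  using assms
  by (simp add: vec_eq_iff Ktens_def lowered_lvec lowered_nvec bbg_eq_outer bbdom_def field_simps)

definition equatorial_point :: "real \<Rightarrow> real^4" where
  "equatorial_point r = (\<chi> i. if i = 1 then r else if i = 2 then pi/2 else 0)"

lemma equatorial_point_nth [simp]:
  "equatorial_point r $ 1 = r" "equatorial_point r $ 2 = pi/2"
  by (simp_all add: equatorial_point_def)

lemma equatorial_point_shift_radial: "equatorial_point r + s *\<^sub>R axis 1 1 = equatorial_point (r + s)"
  by (simp add: vec_eq_iff forall_4_from_0 equatorial_point_def axis_def)

lemma equatorial_point_shift_polar:
  "(equatorial_point r + s *\<^sub>R axis 2 1) $ 1 = r"
  "(equatorial_point r + s *\<^sub>R axis 2 1) $ 2 = pi/2 + s"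
  by (simp_all add: equatorial_point_def axis_def)

lemma Sig_equatorial [simp]: "Sig l (equatorial_point r) = r^2 + l^2"
  by (simp add: Sig_def)

lemma rho2_equatorial [simp]: "rho2 a l (equatorial_point r) = r^2 + l^2"
  by (simp add: rho2_def)

lemma bbdom_equatorial:
  assumes "l \<noteq> 0" "Delta a l m Q (equatorial_point r) \<noteq> 0"
  shows "bbdom a l m Q (equatorial_point r)"
proof -
  have "r^2 + l^2 \<noteq> 0"
    using assms(1) by (simp add: add_nonneg_pos)
  then show ?thesis
    using assms(2) by (simp add: bbdom_def)
qed

lemma pd_eqI:
  assumes "((\<lambda>s. F (x + s *\<^sub>R axis k 1)) has_real_derivative D) (at 0)"
  shows "pd k F x = D"
  using assms unfolding pd_def by (rule DERIV_imp_deriv)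

lemma pd_const [simp]: "pd k (\<lambda>y. c) x = 0"
  by (simp add: pd_def)

lemma pd_ften_01_equatorial: "pd 2 (\<lambda>y. ften a l y $ 0 $ 1) (equatorial_point r) = a"
proof (rule pd_eqI)
  have "(\<lambda>s. ften a l (equatorial_point r + s *\<^sub>R axis 2 1) $ 0 $ 1) = (\<lambda>s. - a * cos (pi/2 + s))"
    by (simp add: ften_def fupper_def equatorial_point_shift_polar)
  moreover have "((\<lambda>s. - a * cos (pi/2 + s)) has_real_derivative a) (at 0)"
    by (auto intro!: derivative_eq_intros)
  ultimately show "((\<lambda>s. ften a l (equatorial_point r + s *\<^sub>R axis 2 1) $ 0 $ 1)
      has_real_derivative a) (at 0)"
    by simp
qed

lemma pd_ften_02_equatorial:
  assumes "l \<noteq> 0"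
  shows "pd 1 (\<lambda>y. ften a l y $ 0 $ 2) (equatorial_point r) = a * r / sqrt (r^2 + l^2)"
proof (rule pd_eqI)
  have "(\<lambda>s. ften a l (equatorial_point r + s *\<^sub>R axis 1 1) $ 0 $ 2) = (\<lambda>s. a * sqrt ((r + s)^2 + l^2))"
    by (simp add: ften_def fupper_def equatorial_point_shift_radial)
  moreover have "0 < r^2 + l^2"
    using assms by (simp add: add_nonneg_pos)
  then have "((\<lambda>s. a * sqrt ((r + s)^2 + l^2)) has_real_derivative a * r / sqrt (r^2 + l^2)) (at 0)"
    by (auto intro!: derivative_eq_intros simp: field_simps)
  ultimately show "((\<lambda>s. ften a l (equatorial_point r + s *\<^sub>R axis 1 1) $ 0 $ 2)
      has_real_derivative a * r / sqrt (r^2 + l^2)) (at 0)"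
    by simp
qed

lemma pd_bbg_22_equatorial: "pd 1 (\<lambda>y. bbg a l m Q y $ 2 $ 2) (equatorial_point r) = 2 * r"
proof (rule pd_eqI)
  have "(\<lambda>s. bbg a l m Q (equatorial_point r + s *\<^sub>R axis 1 1) $ 2 $ 2) = (\<lambda>s. (r + s)^2 + l^2)"
    by (simp add: bbg_def uco_def wco_def equatorial_point_shift_radial)
  moreover have "((\<lambda>s. (r + s)^2 + l^2) has_real_derivative 2 * r) (at 0)"
    by (auto intro!: derivative_eq_intros)
  ultimately show "((\<lambda>s. bbg a l m Q (equatorial_point r + s *\<^sub>R axis 1 1) $ 2 $ 2)
      has_real_derivative 2 * r) (at 0)"
    by simp
qed

lemma bbg_eq_0 [simp]:
  "bbg a l m Q x $ 0 $ 1 = 0" "bbg a l m Q x $ 1 $ 0 = 0" "bbg a l m Q x $ 0 $ 2 = 0"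
  "bbg a l m Q x $ 2 $ 0 = 0" "bbg a l m Q x $ 1 $ 2 = 0" "bbg a l m Q x $ 2 $ 1 = 0"
  "bbg a l m Q x $ 1 $ 3 = 0" "bbg a l m Q x $ 3 $ 1 = 0" "bbg a l m Q x $ 2 $ 3 = 0"
  "bbg a l m Q x $ 3 $ 2 = 0"
  by (simp_all add: bbg_def uco_def wco_def)

lemma bbg_00_30_equatorial:
  assumes "l \<noteq> 0"
  shows "a * bbg a l m Q (equatorial_point r) $ 0 $ 0 + bbg a l m Q (equatorial_point r) $ 3 $ 0 = - a"
proof -
  have "r^2 + l^2 \<noteq> 0"
    using assms by (simp add: add_nonneg_pos)
  then have "(bbg a l m Q (equatorial_point r) *v wco_dual a (equatorial_point r)) $ 0 = - a"
    by (simp add: bbg_mult_wco_dual wco_def)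
  then show ?thesis
    by (simp add: matrix_vector_mult_def sum_UNIV_4_from_0 wco_dual_def
        bbg_symmetric[of a l m Q _ 0 3] mult.commute)
qed

lemma pd_bbg_00_30_equatorial:
  assumes "l \<noteq> 0"
  shows "pd 1 (\<lambda>y. bbg a l m Q y $ 3 $ 0) (equatorial_point r)
    = - a * pd 1 (\<lambda>y. bbg a l m Q y $ 0 $ 0) (equatorial_point r)"
proof -
  define h where "h s = (a * a - Delta a l m Q (equatorial_point (r + s))) / ((r + s)^2 + l^2)" for s
  have h_eq: "bbg a l m Q (equatorial_point (r + s)) $ 0 $ 0 = h s" for s
    by (simp add: h_def bbg_def uco_def wco_def diff_divide_distrib)
  have "0 < r^2 + l^2"
    using assms by (simp add: add_nonneg_pos)
  \<comment> \<open>pd is defined through deriv, which is linear only on differentiable functions\<close>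
  then have "\<exists>D. (h has_real_derivative D) (at 0)"
    unfolding h_def Delta_def Sig_equatorial
    by (intro exI) (rule derivative_eq_intros refl | force)+
  then obtain D where D: "(h has_real_derivative D) (at 0)"
    by blast
  have "pd 1 (\<lambda>y. bbg a l m Q y $ 0 $ 0) (equatorial_point r) = D"
    using D by (intro pd_eqI) (simp add: equatorial_point_shift_radial h_eq)
  moreover have "pd 1 (\<lambda>y. bbg a l m Q y $ 3 $ 0) (equatorial_point r) = - a * D"
  proof (rule pd_eqI)
    have "bbg a l m Q (equatorial_point (r + s)) $ 3 $ 0 = - a - a * h s" for s
      using bbg_00_30_equatorial[OF assms, of a m Q "r + s"] by (simp add: h_eq)
    then show "((\<lambda>s. bbg a l m Q (equatorial_point r + s *\<^sub>R axis 1 1) $ 3 $ 0)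
        has_real_derivative - a * D) (at 0)"
      using D by (auto simp: equatorial_point_shift_radial intro!: derivative_eq_intros)
  qed
  ultimately show ?thesis
    by simp
qed

lemma Chr_equatorial_2_12:
  assumes "bbdom a l m Q (equatorial_point r)"
  shows "Chr a l m Q 2 1 2 (equatorial_point r) = r / (r^2 + l^2)"
    and "Chr a l m Q 2 2 1 (equatorial_point r) = r / (r^2 + l^2)"
  by (simp_all add: Chr_def sum_UNIV_4_from_0 bbginv_eq_outer[OF assms] uco_dual_def wco_dual_def
      axis_def pd_bbg_22_equatorial)

lemma Chr_equatorial_10:
  assumes "l \<noteq> 0" "bbdom a l m Q (equatorial_point r)"
  shows "(r^2 + l^2 + a^2) * Chr a l m Q 3 1 0 (equatorial_point r)
    = a * Chr a l m Q 0 1 0 (equatorial_point r)"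
  using assms(2)
  by (simp add: Chr_def sum_UNIV_4_from_0 bbginv_eq_outer[OF assms(2)] uco_dual_def wco_dual_def
      axis_def pd_bbg_00_30_equatorial[OF assms(1)] bbdom_def field_simps)

lemma covf_sym_equatorial:
  assumes "l \<noteq> 0" "bbdom a l m Q (equatorial_point r)"
  shows "covf_sym a l m Q 0 1 2 (equatorial_point r) = a * (1 - r / sqrt (r^2 + l^2)) / 2"
proof -
  define q where "q = sqrt (r^2 + l^2)"
  have "0 < r^2 + l^2"
    using assms(1) by (simp add: add_nonneg_pos)
  then have "0 < q" and q_sq: "q^2 = r^2 + l^2"
    by (simp_all add: q_def)
  have Chr_2_12_f: "r / (r^2 + l^2) * (a * q) = a * r / q"
    unfolding q_sq[symmetric] using \<open>0 < q\<close> by (simp add: field_simps power2_eq_square)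
  have "(\<Sum>L\<in>UNIV. Chr a l m Q L 1 0 (equatorial_point r) * ften a l (equatorial_point r) $ L $ 2)
      = q * (a * Chr a l m Q 0 1 0 (equatorial_point r)
             - (r^2 + l^2 + a^2) * Chr a l m Q 3 1 0 (equatorial_point r))"
    by (simp add: sum_UNIV_4_from_0 ften_def fupper_def q_def algebra_simps)
  also have "\<dots> = 0"
    using Chr_equatorial_10[OF assms] by simp
  finally have sum_10: "(\<Sum>L\<in>UNIV. Chr a l m Q L 1 0 (equatorial_point r)
      * ften a l (equatorial_point r) $ L $ 2) = 0" .
  have sum_20: "(\<Sum>L\<in>UNIV. Chr a l m Q L 2 0 (equatorial_point r)
      * ften a l (equatorial_point r) $ L $ 1) = 0"
    by (simp add: sum_UNIV_4_from_0 ften_def fupper_def)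
  have sum_21: "(\<Sum>L\<in>UNIV. Chr a l m Q L 2 1 (equatorial_point r)
      * ften a l (equatorial_point r) $ 0 $ L) = a * r / q"
    and sum_12: "(\<Sum>L\<in>UNIV. Chr a l m Q L 1 2 (equatorial_point r)
      * ften a l (equatorial_point r) $ 0 $ L) = a * r / q"
    using Chr_2_12_f
    by (simp_all add: sum_UNIV_4_from_0 ften_def fupper_def q_def[symmetric]
        Chr_equatorial_2_12[OF assms(2)])
  show ?thesis
    unfolding covf_sym_def covf_def pd_ften_01_equatorial pd_ften_02_equatorial[OF assms(1)]
      sum_10 sum_20 sum_21 sum_12 q_def[symmetric]
    by (simp add: field_simps)
qed

lemma Delta_pos:
  assumes "2 * \<bar>m\<bar> < sqrt (Sig l x)"
  shows "0 < Delta a l m Q x"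
proof -
  define q where "q = sqrt (Sig l x)"
  have "Sig l x = q^2"
    using Sig_nonneg[of l x] by (simp add: q_def)
  then have "Delta a l m Q x = q * (q - 2 * m) + a^2 + Q^2"
    unfolding Delta_def q_def[symmetric] by (simp add: power2_eq_square algebra_simps)
  moreover have "0 < q * (q - 2 * m)"
    using assms by (simp add: q_def[symmetric])
  ultimately show ?thesis
    by (simp add: add_pos_nonneg)
qed

lemma less_sqrt_square_add:
  fixes r l :: real
  assumes "l \<noteq> 0"
  shows "r < sqrt (r^2 + l^2)"
proof -
  have "r \<le> sqrt (r^2)"
    by simp
  also have "sqrt (r^2) < sqrt (r^2 + l^2)"
    by (rule real_sqrt_less_mono) (use assms in simp)
  finally show ?thesis .
qed

theorem mainTheorem9:
  fixes a l m Q :: real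
  shows "(\<forall>x. bbdom a l m Q x \<longrightarrow>
            (\<forall>mu nu. (\<Sum>al\<in>UNIV. ften a l x $ mu $ al *
                         (\<Sum>be\<in>UNIV. bbginv a l m Q x $ al $ be * ften a l x $ nu $ be))
                      = Ktens a l m Q x $ mu $ nu))
         \<and> (l \<noteq> 0 \<and> a \<noteq> 0 \<longrightarrow>
            (\<exists>x. bbdom a l m Q x \<and> (\<exists>mu nu al. covf_sym a l m Q mu nu al x \<noteq> 0)))"
proof (intro conjI allI impI)
  fix x mu nu
  assume "bbdom a l m Q x"
  then show "(\<Sum>al\<in>UNIV. ften a l x $ mu $ al *
      (\<Sum>be\<in>UNIV. bbginv a l m Q x $ al $ be * ften a l x $ nu $ be)) = Ktens a l m Q x $ mu $ nu"
    by (simp only: contraction_eq_matrix_product ften_bbginv_ften_eq_outer Ktens_eq_outer)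
next
  assume "l \<noteq> 0 \<and> a \<noteq> 0"
  then have "l \<noteq> 0" "a \<noteq> 0"
    by simp_all
  define r where "r = 2 * \<bar>m\<bar> + 1"
  have "2 * \<bar>m\<bar> < sqrt (Sig l (equatorial_point r))"
    using less_sqrt_square_add[OF \<open>l \<noteq> 0\<close>, of r] by (simp add: r_def)
  then have "0 < Delta a l m Q (equatorial_point r)"
    by (rule Delta_pos)
  then have dom: "bbdom a l m Q (equatorial_point r)"
    using \<open>l \<noteq> 0\<close> by (simp add: bbdom_equatorial)
  have "covf_sym a l m Q 0 1 2 (equatorial_point r) \<noteq> 0"
    unfolding covf_sym_equatorial[OF \<open>l \<noteq> 0\<close> dom]
    using \<open>a \<noteq> 0\<close> less_sqrt_square_add[OF \<open>l \<noteq> 0\<close>, of r] by auto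
  with dom show "\<exists>x. bbdom a l m Q x \<and> (\<exists>mu nu al. covf_sym a l m Q mu nu al x \<noteq> 0)"
    by blast
qed

end
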